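(* Let $\mathbf{K}$ be an associative ring with unit $e$, let $\partial:\mathbf{K}\to\mathbf{K}$ be a derivation (additive and satisfying $\partial(xy)=\partial(x)y+x\partial(y)$), and let $\alpha$ be a ring automorphism of $\mathbf{K}$. Let $P\in\mathbf{K}$ be a constant projector: $P^2=P$, $\partial P=0$, $\alpha(P)=P$. Suppose $x\in\mathbf{K}$ is invertible and satisfies $$\partial(x^{-1}\partial x)=x^{-1}\alpha(x)-\alpha^{-1}(x^{-1})\,x$$ together with $Px=PxP$. Suppose moreover that $z:=PxP$ is invertible in the subring $P\mathbf{K}P$ (whose unit is $P$), with inverse $z^{-1}\in P\mathbf{K}P$. Then $z$ satisfies the same equation in $P\mathbf{K}P$: $$\partial(z^{-1}\partial z)=z^{-1}\alpha(z)-\alpha^{-1}(z^{-1})\,z.$$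
   Context: Here $\alpha^{-1}$ denotes the inverse automorphism. Since $P$ is constant, $\partial$ and $\alpha$ map $P\mathbf{K}P$ into itself. In the paper's application, $\mathbf{K}$ is the ring of bounded operators depending on parameters $k\in\mathbb{Z}$, $t\in\mathbb{R}$, with $\partial$ the $t$-derivative and $\alpha$ the shift $k\mapsto k+1$, and the equation is the abstract Toda lattice equation. *)

theory Defs
  imports Main
begin

definition derivation :: "('a::ring_1 \<Rightarrow> 'a) \<Rightarrow> bool" where
  "derivation d \<longleftrightarrow> (\<forall>a b. d (a + b) = d a + d b) \<and> (\<forall>a b. d (a * b) = d a * b + a * d b)"

definition ring_automorphism :: "('a::ring_1 \<Rightarrow> 'a) \<Rightarrow> bool" where
  "ring_automorphism f \<longleftrightarrow> bij f \<and> (\<forall>a b. f (a + b) = f a + f b) \<and>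
     (\<forall>a b. f (a * b) = f a * f b) \<and> f 1 = 1"

end

theory Submission
  imports Defs
begin

text \<open>
  Since \<open>P x (1 - P) = 0\<close>, the corner of the inverse of \<open>x\<close> is the inverse of its
  corner: \<open>P x\<^sup>-\<^sup>1 = z\<^sup>-\<^sup>1\<close>.
  The maps \<open>\<partial>\<close>, \<open>\<alpha>\<close> and \<open>\<alpha>\<^sup>-\<^sup>1\<close> all commute with the compression \<open>a \<mapsto> P a P\<close>
  because they fix \<open>P\<close>, so compressing the equation for \<open>x\<close> by \<open>P\<close> on both sides
  yields the equation for \<open>z\<close>, term by term.
\<close>

lemma derivation_mult: "derivation d \<Longrightarrow> d (a * b) = d a * b + a * d b"
  by (simp add: derivation_def)

lemma derivation_corner:
  assumes "derivation d" and "d P = 0"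
  shows "d (P * a * P) = P * d a * P"
  using assms by (simp add: derivation_mult)

lemma ring_automorphism_add: "ring_automorphism f \<Longrightarrow> f (a + b) = f a + f b"
  and ring_automorphism_mult: "ring_automorphism f \<Longrightarrow> f (a * b) = f a * f b"
  and ring_automorphism_one: "ring_automorphism f \<Longrightarrow> f 1 = 1"
  and ring_automorphism_bij: "ring_automorphism f \<Longrightarrow> bij f"
  by (simp_all add: ring_automorphism_def)

lemma ring_automorphism_inv:
  assumes f: "ring_automorphism f"
  shows "ring_automorphism (inv f)"
proof -
  have bij: "bij f" using f by (rule ring_automorphism_bij)
  then have f_inv: "f (inv f y) = y" for y
    by (simp add: bij_is_surj surj_f_inv_f)
  have inv_f: "inv f (f y) = y" for y
    using bij by (simp add: bij_is_inj)
  have "inv f (a + b) = inv f a + inv f b" for a b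
    by (metis f inv_f f_inv ring_automorphism_add)
  moreover have "inv f (a * b) = inv f a * inv f b" for a b
    by (metis f inv_f f_inv ring_automorphism_mult)
  moreover have "inv f 1 = 1"
    by (metis f inv_f ring_automorphism_one)
  ultimately show ?thesis
    using bij by (simp add: ring_automorphism_def bij_imp_bij_inv)
qed

lemma ring_automorphism_inv_fixed:
  assumes "ring_automorphism f" and "f P = P"
  shows "inv f P = P"
  using assms by (metis bij_is_inj inv_f_f ring_automorphism_bij)

lemma ring_automorphism_corner:
  assumes "ring_automorphism f" and "f P = P"
  shows "f (P * a * P) = P * f a * P"
  using assms by (simp add: ring_automorphism_mult)

lemma corner_of_inverse:
  fixes P x xi zi :: "'a::monoid_mult"
  assumes "x * xi = 1" and "zi * P = zi" and "zi * (P * x) = P"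
  shows "P * xi = zi"
proof -
  have "zi = zi * (P * x) * xi"
    using assms(1,2) by (simp add: mult.assoc)
  then show ?thesis
    using assms(3) by simp
qed

theorem lemma2:
  fixes d \<alpha> :: "'a::ring_1 \<Rightarrow> 'a" and P x xi zi :: 'a
  assumes der: "derivation d"
    and aut: "ring_automorphism \<alpha>"
    and proj: "P * P = P" and dP: "d P = 0" and aP: "\<alpha> P = P"
    and xinv: "x * xi = 1" "xi * x = 1"
    and eqx: "d (xi * d x) = xi * \<alpha> x - inv \<alpha> xi * x"
    and Px: "P * x = P * x * P"
    and zi_in: "zi = P * zi * P"
    and zinv: "(P * x * P) * zi = P" "zi * (P * x * P) = P"
  shows "d (zi * d (P * x * P)) = zi * \<alpha> (P * x * P) - inv \<alpha> zi * (P * x * P)"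
proof -
  have ziP: "zi * P = zi"
    using zi_in proj by (metis mult.assoc)
  have Pxi: "P * xi = zi"
    using corner_of_inverse[OF xinv(1) ziP] zinv(2) Px by simp
  have "zi * d (P * x * P) = (zi * P) * d x * P"
    unfolding derivation_corner[OF der dP] by (simp add: mult.assoc)
  also have "\<dots> = P * (xi * d x) * P"
    using Pxi ziP by (metis mult.assoc)
  finally have zi_dz: "zi * d (P * x * P) = P * (xi * d x) * P" .
  have "d (zi * d (P * x * P)) = P * d (xi * d x) * P"
    unfolding zi_dz by (rule derivation_corner[OF der dP])
  moreover have "zi * \<alpha> (P * x * P) = P * (xi * \<alpha> x) * P"
    unfolding ring_automorphism_corner[OF aut aP] using Pxi ziP by (metis mult.assoc)
  moreover have "inv \<alpha> zi * (P * x * P) = P * (inv \<alpha> xi * x) * P"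
  proof -
    have inv_hom: "inv \<alpha> (a * b) = inv \<alpha> a * inv \<alpha> b" for a b
      using ring_automorphism_inv[OF aut] by (rule ring_automorphism_mult)
    have "inv \<alpha> zi * (P * x * P) = inv \<alpha> (zi * P) * x * P"
      by (simp add: inv_hom ring_automorphism_inv_fixed[OF aut aP] mult.assoc)
    also have "\<dots> = inv \<alpha> (P * xi) * x * P"
      using ziP Pxi by simp
    also have "\<dots> = P * (inv \<alpha> xi * x) * P"
      by (simp add: inv_hom ring_automorphism_inv_fixed[OF aut aP] mult.assoc)
    finally show ?thesis .
  qed
  ultimately show ?thesis
    by (simp add: eqx right_diff_distrib left_diff_distrib)
qed

end
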